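(* Let $s=s(L)$ satisfy $\log^9L\le s\le L/\log^5L$. Let $\Xi_0$ be the random subset of $\mathbb{Z}_L^+=\{0,\dots,\lfloor(L-1)/2\rfloor\}$ obtained by including each element independently with probability $s/L$, and let $\Xi=\Xi_0\cup(-\Xi_0)$ (the support of the symmetric Bernoulli-Gaussian distribution with mean $0$, variance $\zeta^2$ and sparsity parameter $s$). Then for $L$ large enough, the distribution of $\Xi$ is typically $s$-sparse with sparsity constants $(1/2,2)$, and is $s/32$-cosine generic.
   Context: $\mathbb{Z}_L=\{\lfloor-(L-1)/2\rfloor,\dots,\lfloor(L-1)/2\rfloor\}$. A distribution of random subsets $\Xi\subset\mathbb{Z}_L$ is typically $s$-sparse with sparsity constants $(\alpha,\beta)$ if $\alpha s\le|\Xi|\le\beta s$ with probability $1-o_L(1)$. With $\mathcal{V}(\Xi,a)=\mathbf{1}_{\{0\in\Xi\}}+2\sum_{k\in\Xi\setminus\{0\}}\cos^2(2\pi ak/L)$, the distribution is $\Gamma$-cosine generic if with probability $1-o_L(1)$, $\min_{a\in\mathbb{Z}_L}\mathcal{V}(\Xi,a)\ge\Gamma(1-o_L(1))$. *)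

theory Defs
  imports "HOL-Probability.Probability"
begin

definition ZL :: "nat \<Rightarrow> int set" where
  "ZL L = {\<lfloor>- (real L - 1) / 2\<rfloor> .. \<lfloor>(real L - 1) / 2\<rfloor>}"

definition ZLplus :: "nat \<Rightarrow> int set" where
  "ZLplus L = {0 .. \<lfloor>(real L - 1) / 2\<rfloor>}"

definition cosV :: "nat \<Rightarrow> int set \<Rightarrow> int \<Rightarrow> real" where
  "cosV L Xi a = (if 0 \<in> Xi then 1 else 0)
     + 2 * (\<Sum>k\<in>Xi - {0}. (cos (2 * pi * real_of_int a * real_of_int k / real L))\<^sup>2)"

definition typically_sparse :: "(nat \<Rightarrow> int set pmf) \<Rightarrow> (nat \<Rightarrow> real) \<Rightarrow> real \<Rightarrow> real \<Rightarrow> bool" where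
  "typically_sparse D s \<alpha> \<beta> \<longleftrightarrow>
     ((\<lambda>L. measure_pmf.prob (D L) {Xi. \<alpha> * s L \<le> real (card Xi) \<and> real (card Xi) \<le> \<beta> * s L})
        \<longlongrightarrow> 1) sequentially"

definition cosine_generic :: "(nat \<Rightarrow> int set pmf) \<Rightarrow> (nat \<Rightarrow> real) \<Rightarrow> bool" where
  "cosine_generic D \<Gamma> \<longleftrightarrow>
     (\<exists>\<epsilon> :: nat \<Rightarrow> real. (\<epsilon> \<longlongrightarrow> 0) sequentially \<and>
        ((\<lambda>L. measure_pmf.prob (D L) {Xi. \<forall>a\<in>ZL L. cosV L Xi a \<ge> \<Gamma> L * (1 - \<epsilon> L)})
          \<longlongrightarrow> 1) sequentially)"

definition sym_bernoulli_support :: "(nat \<Rightarrow> real) \<Rightarrow> nat \<Rightarrow> int set pmf" where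
  "sym_bernoulli_support s L =
     map_pmf (\<lambda>f. let X0 = {k \<in> ZLplus L. f k} in X0 \<union> uminus ` X0)
       (Pi_pmf (ZLplus L) False (\<lambda>_. bernoulli_pmf (s L / real L)))"

end

theory Submission
  imports Defs "HOL-Real_Asymp.Real_Asymp"
begin

(* Everything follows from Chernoff bounds for the independent indicators f k, k in Z_L^+,
   each true with probability p = s/L.
   Sparsity: |Xi_0| is binomial with mean about s/2, and 2|Xi_0| - 1 <= |Xi| <= 2|Xi_0|, so
   s/2 <= |Xi| <= 2s fails only with probability exp(-Omega(s)).
   Cosine genericity: for a fixed frequency a, V(Xi, a) >= 2 sum_{k in Xi_0 - {0}} cos^2(2 pi a k / L),
   a sum of the indicators with weights in [0, 1] and total weight >= 7L/128 - O(1), because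
   cos^2 x + cos^2 (2x) >= 7/16 lets one pair k with 2k.  The lower-tail Chernoff bound gives
   V(Xi, a) >= s/32 except with probability exp(-s/100), and the union bound over the 2L + 1
   frequencies costs a factor O(L), which exp(-log^9 L / 100) absorbs. *)

lemma expectation_Pi_bernoulli_exp_sum_le:
  fixes w :: "'a \<Rightarrow> real"
  assumes fin: "finite I" and p: "0 \<le> p" "p \<le> 1"
  shows "measure_pmf.expectation (Pi_pmf I False (\<lambda>_. bernoulli_pmf p))
           (\<lambda>f. exp (sum w {k\<in>I. f k})) \<le> exp (p * (\<Sum>k\<in>I. exp (w k) - 1))"
proof -
  have exp_sum_eq: "exp (sum w {k\<in>I. f k}) = (\<Prod>k\<in>I. if f k then exp (w k) else 1)" for f
    using fin by (simp add: exp_sum prod.inter_filter)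
  have "measure_pmf.expectation (Pi_pmf I False (\<lambda>_. bernoulli_pmf p)) (\<lambda>f. exp (sum w {k\<in>I. f k}))
      = (\<Prod>k\<in>I. measure_pmf.expectation (bernoulli_pmf p) (\<lambda>b. if b then exp (w k) else 1))"
    unfolding exp_sum_eq
    by (rule expectation_prod_Pi_pmf[where f = "\<lambda>k b. if b then exp (w k) else 1", simplified])
       (auto simp: fin intro!: integrable_measure_pmf_finite)
  also have "\<dots> = (\<Prod>k\<in>I. 1 + p * (exp (w k) - 1))"
    using p by (intro prod.cong) (auto simp: algebra_simps)
  also have "\<dots> \<le> (\<Prod>k\<in>I. exp (p * (exp (w k) - 1)))"
  proof (rule prod_mono)
    fix k
    have "0 \<le> (1 - p) + p * exp (w k)" using p by simp
    then show "0 \<le> 1 + p * (exp (w k) - 1) \<and> 1 + p * (exp (w k) - 1) \<le> exp (p * (exp (w k) - 1))"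
      using exp_ge_add_one_self[of "p * (exp (w k) - 1)"] by (simp add: algebra_simps)
  qed
  also have "\<dots> = exp (p * (\<Sum>k\<in>I. exp (w k) - 1))"
    by (simp add: exp_sum[OF fin] sum_distrib_left)
  finally show ?thesis .
qed

lemma prob_Pi_bernoulli_sum_ge:
  fixes w :: "'a \<Rightarrow> real"
  assumes fin: "finite I" and p: "0 \<le> p" "p \<le> 1"
  shows "measure_pmf.prob (Pi_pmf I False (\<lambda>_. bernoulli_pmf p)) {f. c \<le> sum w {k\<in>I. f k}}
           \<le> exp (p * (\<Sum>k\<in>I. exp (w k) - 1) - c)"
proof -
  let ?Q = "Pi_pmf I False (\<lambda>_. bernoulli_pmf p)"
  have fin_Q: "finite (set_pmf ?Q)"
    using fin by (simp add: set_Pi_pmf finite_PiE_dflt)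
  have "measure_pmf.prob ?Q {f. c \<le> sum w {k\<in>I. f k}}
      = measure_pmf.expectation ?Q (indicator {f. c \<le> sum w {k\<in>I. f k}})"
    by simp
  also have "\<dots> \<le> measure_pmf.expectation ?Q (\<lambda>f. exp (sum w {k\<in>I. f k} - c))"
    by (rule integral_mono) (auto simp: fin_Q integrable_measure_pmf_finite indicator_def)
  also have "\<dots> = exp (- c) * measure_pmf.expectation ?Q (\<lambda>f. exp (sum w {k\<in>I. f k}))"
    by (simp add: exp_diff exp_minus field_simps)
  also have "\<dots> \<le> exp (- c) * exp (p * (\<Sum>k\<in>I. exp (w k) - 1))"
    by (simp add: expectation_Pi_bernoulli_exp_sum_le[OF fin p])
  finally show ?thesis
    by (simp add: mult_exp_exp)
qed

lemma exp_neg_le_one_minus: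
  fixes x :: real
  assumes "0 \<le> x" "x \<le> 1"
  shows "exp (- x) \<le> 1 - 3/5 * x"
proof -
  have "exp (- x) \<le> (1 - x) * exp 0 + x * exp (-1)"
    using convex_onD[OF exp_convex, of x 0 "-1"] assms by simp
  also have "\<dots> \<le> (1 - x) + x * (2/5)"
    using exp_lower_Taylor_quadratic[of 1] assms
    by (intro add_mono mult_left_mono) (auto simp: exp_minus field_simps)
  finally show ?thesis by simp
qed

lemma prob_Pi_bernoulli_sum_le:
  fixes w :: "'a \<Rightarrow> real"
  assumes fin: "finite I" and p: "0 \<le> p" "p \<le> 1" and w: "\<And>k. k \<in> I \<Longrightarrow> 0 \<le> w k \<and> w k \<le> 1"
  shows "measure_pmf.prob (Pi_pmf I False (\<lambda>_. bernoulli_pmf p)) {f. sum w {k\<in>I. f k} \<le> c}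
           \<le> exp (c - 3/5 * p * sum w I)"
proof -
  have "{f. sum w {k\<in>I. f k} \<le> c} = {f. - c \<le> sum (\<lambda>k. - w k) {k\<in>I. f k}}"
    by (auto simp: sum_negf)
  then have "measure_pmf.prob (Pi_pmf I False (\<lambda>_. bernoulli_pmf p)) {f. sum w {k\<in>I. f k} \<le> c}
      \<le> exp (p * (\<Sum>k\<in>I. exp (- w k) - 1) + c)"
    using prob_Pi_bernoulli_sum_ge[OF fin p, of "- c" "\<lambda>k. - w k"] by simp
  also have "\<dots> \<le> exp (c - 3/5 * p * sum w I)"
  proof -
    have "(\<Sum>k\<in>I. exp (- w k) - 1) \<le> (\<Sum>k\<in>I. - (3/5) * w k)"
      using exp_neg_le_one_minus w by (intro sum_mono) fastforce
    also have "\<dots> = - (3/5) * sum w I"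
      by (simp add: sum_distrib_left)
    finally have "p * (\<Sum>k\<in>I. exp (- w k) - 1) \<le> p * (- (3/5) * sum w I)"
      using p(1) by (rule mult_left_mono)
    then show ?thesis by simp
  qed
  finally show ?thesis .
qed

lemma finite_ZLplus: "finite (ZLplus L)"
  by (simp add: ZLplus_def)

lemma card_ZLplus_bounds:
  "real L / 2 \<le> real (card (ZLplus L))" "real (card (ZLplus L)) \<le> (real L + 1) / 2"
proof -
  define M where "M = \<lfloor>(real L - 1) / 2\<rfloor>"
  have "real_of_int M \<le> (real L - 1) / 2"
    unfolding M_def by linarith
  moreover have "int L < 2 * M + 3"
  proof -
    have "(real L - 1) / 2 < real_of_int M + 1"
      unfolding M_def by linarith
    then have "real_of_int (int L) < real_of_int (2 * M + 3)"
      by simp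
    then show ?thesis
      by (simp only: of_int_less_iff)
  qed
  moreover have "M \<ge> -1"
    unfolding M_def by (simp add: le_floor_iff)
  moreover have "card (ZLplus L) = nat (M + 1)"
    by (simp add: ZLplus_def M_def)
  ultimately show "real L / 2 \<le> real (card (ZLplus L))" "real (card (ZLplus L)) \<le> (real L + 1) / 2"
    by simp_all
qed

lemma card_ZL_le: "card (ZL L) \<le> 2 * L + 1"
proof -
  have "ZL L \<subseteq> {- int L .. int L}"
    unfolding ZL_def by (auto simp: le_floor_iff floor_le_iff)
  then have "card (ZL L) \<le> card {- int L .. int L}"
    by (rule card_mono[rotated]) simp
  then show ?thesis by simp
qed

lemma card_Un_uminus_image:
  fixes X :: "int set"
  assumes "finite X" "X \<subseteq> {0..}"
  shows "card (X \<union> uminus ` X) \<le> 2 * card X"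
    and "2 * card X \<le> card (X \<union> uminus ` X) + 1"
proof -
  have card_image: "card (uminus ` X) = card X"
    by (simp add: card_image)
  have "X \<inter> uminus ` X \<subseteq> {0}"
  proof
    fix y assume "y \<in> X \<inter> uminus ` X"
    then have "0 \<le> y" "0 \<le> - y"
      using assms(2) by auto
    then show "y \<in> {0}" by simp
  qed
  then have "card (X \<inter> uminus ` X) \<le> 1"
    using card_mono[of "{0}" "X \<inter> uminus ` X"] by simp
  moreover have "card (X \<union> uminus ` X) + card (X \<inter> uminus ` X) = 2 * card X"
    using card_Un_Int[of X "uminus ` X"] assms(1) card_image by simp
  ultimately show "card (X \<union> uminus ` X) \<le> 2 * card X" "2 * card X \<le> card (X \<union> uminus ` X) + 1"
    by linarith+
qed

lemma card_Un_uminus_image_between: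
  fixes X :: "int set"
  assumes "finite X" "X \<subseteq> {0..}" "S / 4 + 1 < real (card X)" "real (card X) < S"
  shows "1/2 * S \<le> real (card (X \<union> uminus ` X)) \<and> real (card (X \<union> uminus ` X)) \<le> 2 * S"
proof -
  have "real (card (X \<union> uminus ` X)) \<le> 2 * real (card X)"
    "2 * real (card X) \<le> real (card (X \<union> uminus ` X)) + 1"
    using card_Un_uminus_image[OF assms(1,2)] by (simp_all flip: of_nat_le_iff)
  with assms(3,4) show ?thesis
    by linarith
qed

lemma cos_square_add_cos_double_square_ge: "7/16 \<le> (cos (x :: real))\<^sup>2 + (cos (2 * x))\<^sup>2"
proof -
  have "0 \<le> (2 * (cos x)\<^sup>2 - 3/4)\<^sup>2" by simp
  then show ?thesis
    unfolding cos_double_cos by (simp add: power2_eq_square algebra_simps)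
qed

lemma sum_cos_square_ge:
  fixes \<theta> :: real and M :: int
  shows "7/64 * (of_int M - 1) \<le> (\<Sum>k\<in>{1..M}. (cos (\<theta> * of_int k))\<^sup>2)"
proof -
  define g where "g k = (cos (\<theta> * of_int k))\<^sup>2" for k :: int
  define N where "N = M div 2"
  have sum_le: "sum (g \<circ> h) {1..N} \<le> sum g {1..M}"
    if "h ` {1..N} \<subseteq> {1..M}" "inj_on h {1..N}" for h
  proof -
    have "sum (g \<circ> h) {1..N} = sum g (h ` {1..N})"
      using that(2) by (simp add: sum.reindex)
    also have "\<dots> \<le> sum g {1..M}"
      using that(1) by (intro sum_mono2) (auto simp: g_def)
    finally show ?thesis .
  qed
  have "7/16 * real (nat N) = (\<Sum>j\<in>{1..N}. 7/16)"
    by simp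
  also have "\<dots> \<le> (\<Sum>j\<in>{1..N}. g j + g (2 * j))"
  proof (rule sum_mono)
    fix j
    show "7/16 \<le> g j + g (2 * j)"
      using cos_square_add_cos_double_square_ge[of "\<theta> * of_int j"]
      by (simp add: g_def mult.left_commute)
  qed
  also have "\<dots> = sum (g \<circ> id) {1..N} + sum (g \<circ> (\<lambda>j. 2 * j)) {1..N}"
    by (simp add: sum.distrib)
  also have "\<dots> \<le> 2 * sum g {1..M}"
  proof -
    have "(\<lambda>j. 2 * j) ` {1..N} \<subseteq> {1..M}" "id ` {1..N} \<subseteq> {1..M}"
      unfolding N_def by auto
    then show ?thesis
      using sum_le[of id] sum_le[of "\<lambda>j. 2 * j"] by (simp add: inj_on_def)
  qed
  finally have "7/16 * real (nat N) \<le> 2 * sum g {1..M}" .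
  moreover have "of_int M - 1 \<le> 2 * real (nat N)"
    unfolding N_def by linarith
  ultimately show ?thesis
    unfolding g_def by argo
qed

lemma sum_cos_square_ZLplus_ge:
  "7/128 * (real L - 5) \<le> (\<Sum>k\<in>ZLplus L - {0}. (cos (\<theta> * of_int k))\<^sup>2)"
proof -
  define M where "M = \<lfloor>(real L - 1) / 2\<rfloor>"
  have "ZLplus L - {0} = {1..M}"
    by (auto simp: ZLplus_def M_def)
  moreover have "(real L - 1) / 2 < of_int M + 1"
    unfolding M_def by linarith
  ultimately show ?thesis
    using sum_cos_square_ge[of M \<theta>] by simp
qed

lemma cosV_Un_uminus_image_ge:
  assumes "finite X"
  shows "2 * (\<Sum>k\<in>X - {0}. (cos (2 * pi * of_int a * of_int k / real L))\<^sup>2)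
           \<le> cosV L (X \<union> uminus ` X) a"
proof -
  have "(\<Sum>k\<in>X - {0}. (cos (2 * pi * of_int a * of_int k / real L))\<^sup>2)
      \<le> (\<Sum>k\<in>(X \<union> uminus ` X) - {0}. (cos (2 * pi * of_int a * of_int k / real L))\<^sup>2)"
    using assms by (intro sum_mono2) auto
  moreover have "0 \<le> (if 0 \<in> X \<union> uminus ` X then 1 else 0 :: real)"
    by simp
  ultimately show ?thesis
    unfolding cosV_def by linarith
qed

lemma prob_sym_bernoulli_support:
  "measure_pmf.prob (sym_bernoulli_support s L) A =
     measure_pmf.prob (Pi_pmf (ZLplus L) False (\<lambda>_. bernoulli_pmf (s L / real L)))
       {f. {k \<in> ZLplus L. f k} \<union> uminus ` {k \<in> ZLplus L. f k} \<in> A}"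
  by (simp add: sym_bernoulli_support_def Let_def vimage_def)

lemma prob_ge_if_compl_subset:
  assumes "- A \<subseteq> B"
  shows "1 - measure_pmf.prob M B \<le> measure_pmf.prob M A"
  using measure_pmf.prob_compl[of A M] measure_pmf.finite_measure_mono[OF assms, of M]
  by (simp add: Compl_eq_Diff_UNIV)

lemma prob_Pi_bernoulli_card_le:
  assumes "finite I" "0 \<le> p" "p \<le> 1"
  shows "measure_pmf.prob (Pi_pmf I False (\<lambda>_. bernoulli_pmf p)) {f. real (card {k\<in>I. f k}) \<le> c}
           \<le> exp (c - 3/5 * p * card I)"
  using prob_Pi_bernoulli_sum_le[OF assms, of "\<lambda>_. 1" c] by simp

lemma prob_Pi_bernoulli_card_ge:
  assumes "finite I" "0 \<le> p" "p \<le> 1"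
  shows "measure_pmf.prob (Pi_pmf I False (\<lambda>_. bernoulli_pmf p)) {f. c \<le> real (card {k\<in>I. f k})}
           \<le> exp ((exp 1 - 1) * p * card I - c)"
  using prob_Pi_bernoulli_sum_ge[OF assms, of c "\<lambda>_. 1"] by (simp add: mult_ac)

lemma density_mult_card_ZLplus_bounds:
  assumes "100 \<le> L" "0 \<le> S"
  shows "S / 2 \<le> S / real L * card (ZLplus L)" "S / real L * card (ZLplus L) \<le> S / 2 + S / 200"
proof -
  have "S / real L * (real L / 2) \<le> S / real L * card (ZLplus L)"
    "S / real L * card (ZLplus L) \<le> S / real L * ((real L + 1) / 2)"
    using card_ZLplus_bounds[of L] assms by (intro mult_left_mono; simp)+
  moreover have "S / real L \<le> S / 100"
    using assms by (intro divide_left_mono) auto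
  ultimately show "S / 2 \<le> S / real L * card (ZLplus L)" "S / real L * card (ZLplus L) \<le> S / 2 + S / 200"
    using assms by (simp_all add: field_simps)
qed

lemma prob_card_ZLplus_subset_tails:
  assumes L: "100 \<le> L" and S: "0 < S" "S \<le> real L"
  defines "Q \<equiv> Pi_pmf (ZLplus L) False (\<lambda>_. bernoulli_pmf (S / real L))"
  shows "measure_pmf.prob Q {f. real (card {k \<in> ZLplus L. f k}) \<le> S / 4 + 1} \<le> exp (1 - S / 20)"
    and "measure_pmf.prob Q {f. S \<le> real (card {k \<in> ZLplus L. f k})} \<le> exp (- S / 10)"
proof -
  define p where "p = S / real L"
  have p: "0 \<le> p" "p \<le> 1"
    using S L by (auto simp: p_def field_simps)
  note mean = density_mult_card_ZLplus_bounds[OF L less_imp_le[OF S(1)], folded p_def]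
  have "measure_pmf.prob Q {f. real (card {k \<in> ZLplus L. f k}) \<le> S / 4 + 1}
      \<le> exp (S / 4 + 1 - 3/5 * p * card (ZLplus L))"
    unfolding Q_def p_def[symmetric] by (rule prob_Pi_bernoulli_card_le[OF finite_ZLplus p])
  also have "\<dots> \<le> exp (1 - S / 20)"
    using mean by simp
  finally show "measure_pmf.prob Q {f. real (card {k \<in> ZLplus L. f k}) \<le> S / 4 + 1} \<le> exp (1 - S / 20)" .
  have "measure_pmf.prob Q {f. S \<le> real (card {k \<in> ZLplus L. f k})}
      \<le> exp ((exp 1 - 1) * p * card (ZLplus L) - S)"
    unfolding Q_def p_def[symmetric] by (rule prob_Pi_bernoulli_card_ge[OF finite_ZLplus p])
  also have "\<dots> \<le> exp (- S / 10)"
  proof -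
    have "(exp 1 - 1) * (p * card (ZLplus L)) \<le> 172/100 * (S / 2 + S / 200)"
      using mean e_less_272 S(1) by (intro mult_mono) auto
    then show ?thesis
      unfolding exp_le_cancel_iff using S(1) by (simp add: mult.assoc)
  qed
  finally show "measure_pmf.prob Q {f. S \<le> real (card {k \<in> ZLplus L. f k})} \<le> exp (- S / 10)" .
qed

lemma sym_bernoulli_support_sparse_prob_ge:
  assumes L: "100 \<le> L" and \<sigma>: "0 < \<sigma>" "\<sigma> \<le> s L" and s: "s L \<le> real L"
  shows "1 - exp (1 - \<sigma> / 20) - exp (- \<sigma> / 10) \<le> measure_pmf.prob (sym_bernoulli_support s L)
           {Xi. 1/2 * s L \<le> real (card Xi) \<and> real (card Xi) \<le> 2 * s L}"
proof -
  define S I where "S = s L" and "I = ZLplus L"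
  let ?Q = "Pi_pmf I False (\<lambda>_. bernoulli_pmf (S / real L))"
  let ?N = "\<lambda>f. real (card {k \<in> I. f k})"
  have S: "0 < S" "\<sigma> \<le> S" "S \<le> real L"
    using \<sigma> s by (auto simp: S_def)
  have "- {f. {k \<in> I. f k} \<union> uminus ` {k \<in> I. f k}
              \<in> {Xi. 1/2 * S \<le> real (card Xi) \<and> real (card Xi) \<le> 2 * S}}
        \<subseteq> {f. ?N f \<le> S / 4 + 1} \<union> {f. S \<le> ?N f}"
  proof
    fix f
    assume "f \<in> - {f. {k \<in> I. f k} \<union> uminus ` {k \<in> I. f k}
              \<in> {Xi. 1/2 * S \<le> real (card Xi) \<and> real (card Xi) \<le> 2 * S}}"
    moreover have "finite {k \<in> I. f k}"
      using finite_ZLplus by (simp add: I_def)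
    moreover have "{k \<in> I. f k} \<subseteq> {0..}"
      by (auto simp: I_def ZLplus_def)
    ultimately show "f \<in> {f. ?N f \<le> S / 4 + 1} \<union> {f. S \<le> ?N f}"
      using card_Un_uminus_image_between[of "{k \<in> I. f k}" S] by force
  qed
  then have "1 - measure_pmf.prob ?Q ({f. ?N f \<le> S / 4 + 1} \<union> {f. S \<le> ?N f})
      \<le> measure_pmf.prob (sym_bernoulli_support s L)
           {Xi. 1/2 * s L \<le> real (card Xi) \<and> real (card Xi) \<le> 2 * s L}"
    unfolding prob_sym_bernoulli_support S_def[symmetric] I_def[symmetric]
    by (rule prob_ge_if_compl_subset)
  moreover have "measure_pmf.prob ?Q ({f. ?N f \<le> S / 4 + 1} \<union> {f. S \<le> ?N f})
      \<le> measure_pmf.prob ?Q {f. ?N f \<le> S / 4 + 1} + measure_pmf.prob ?Q {f. S \<le> ?N f}"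
    by (rule measure_Un_le) simp_all
  moreover have "exp (1 - S / 20) \<le> exp (1 - \<sigma> / 20)" "exp (- S / 10) \<le> exp (- \<sigma> / 10)"
    using S(2) by simp_all
  ultimately show ?thesis
    using prob_card_ZLplus_subset_tails[OF L S(1,3)] unfolding S_def I_def by linarith
qed

lemma prob_Pi_bernoulli_cos_square_sum_le:
  assumes L: "100 \<le> L" and S: "0 < S" "S \<le> real L"
  shows "measure_pmf.prob (Pi_pmf (ZLplus L) False (\<lambda>_. bernoulli_pmf (S / real L)))
           {f. (\<Sum>k\<in>{k \<in> ZLplus L. f k} - {0}. (cos (2 * pi * of_int a * of_int k / real L))\<^sup>2) \<le> S / 64}
         \<le> exp (- S / 100)"
proof -
  define I p where "I = ZLplus L" and "p = S / real L"
  define w where "w k = (if k = 0 then 0 else (cos (2 * pi * of_int a * of_int k / real L))\<^sup>2)" for k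
  have fin: "finite I"
    by (simp add: I_def finite_ZLplus)
  have p: "0 \<le> p" "p \<le> 1" "p \<le> S / 100" "p * real L = S"
    using S L by (auto simp: p_def field_simps)
  have sum_w: "sum w X = (\<Sum>k\<in>X - {0}. (cos (2 * pi * of_int a * of_int k / real L))\<^sup>2)"
    if "finite X" for X
    using that by (simp add: w_def sum.If_cases Diff_eq)
  have "7/128 * (real L - 5) \<le> sum w I"
    unfolding sum_w[OF fin] unfolding I_def
    using sum_cos_square_ZLplus_ge[of L "2 * pi * of_int a / real L"] by simp
  then have "p * (7/128 * (real L - 5)) \<le> p * sum w I"
    using p(1) by (rule mult_left_mono)
  then have mean: "7/128 * (S - 5 * p) \<le> p * sum w I"
    using p(4) by (simp add: algebra_simps)
  have "measure_pmf.prob (Pi_pmf I False (\<lambda>_. bernoulli_pmf p)) {f. sum w {k \<in> I. f k} \<le> S / 64}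
      \<le> exp (S / 64 - 3/5 * p * sum w I)"
    by (rule prob_Pi_bernoulli_sum_le[OF fin p(1,2)]) (simp add: w_def abs_square_le_1)
  also have "\<dots> \<le> exp (- S / 100)"
    using mean p(3) S(1) by simp
  finally show ?thesis
    using fin by (simp add: sum_w I_def p_def)
qed

lemma sym_bernoulli_support_cosine_prob_ge:
  assumes L: "100 \<le> L" and \<sigma>: "0 < \<sigma>" "\<sigma> \<le> s L" and s: "s L \<le> real L"
  shows "1 - (2 * real L + 1) * exp (- \<sigma> / 100) \<le> measure_pmf.prob (sym_bernoulli_support s L)
           {Xi. \<forall>a\<in>ZL L. s L / 32 \<le> cosV L Xi a}"
proof -
  define S I p where "S = s L" and "I = ZLplus L" and "p = S / real L"
  let ?Q = "Pi_pmf I False (\<lambda>_. bernoulli_pmf p)"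
  let ?B = "\<lambda>a. {f. (\<Sum>k\<in>{k \<in> I. f k} - {0}. (cos (2 * pi * of_int a * of_int k / real L))\<^sup>2) \<le> S / 64}"
  have S: "0 < S" "\<sigma> \<le> S" "S \<le> real L"
    using \<sigma> s by (auto simp: S_def)
  have "- {f. {k \<in> I. f k} \<union> uminus ` {k \<in> I. f k} \<in> {Xi. \<forall>a\<in>ZL L. S / 32 \<le> cosV L Xi a}}
        \<subseteq> (\<Union>a\<in>ZL L. ?B a)"
  proof
    fix f
    assume "f \<in> - {f. {k \<in> I. f k} \<union> uminus ` {k \<in> I. f k} \<in> {Xi. \<forall>a\<in>ZL L. S / 32 \<le> cosV L Xi a}}"
    then obtain a where "a \<in> ZL L" "cosV L ({k \<in> I. f k} \<union> uminus ` {k \<in> I. f k}) a < S / 32"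
      by auto
    moreover have "finite {k \<in> I. f k}"
      using finite_ZLplus by (simp add: I_def)
    ultimately show "f \<in> (\<Union>a\<in>ZL L. ?B a)"
      using cosV_Un_uminus_image_ge[of "{k \<in> I. f k}" a L] by fastforce
  qed
  then have "1 - measure_pmf.prob ?Q (\<Union>a\<in>ZL L. ?B a)
      \<le> measure_pmf.prob (sym_bernoulli_support s L) {Xi. \<forall>a\<in>ZL L. s L / 32 \<le> cosV L Xi a}"
    unfolding prob_sym_bernoulli_support S_def[symmetric] p_def[symmetric] I_def[symmetric]
    by (rule prob_ge_if_compl_subset)
  moreover have "measure_pmf.prob ?Q (\<Union>a\<in>ZL L. ?B a) \<le> (\<Sum>a\<in>ZL L. measure_pmf.prob ?Q (?B a))"
    by (rule measure_UNION_le) (simp_all add: ZL_def)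
  moreover have "(\<Sum>a\<in>ZL L. measure_pmf.prob ?Q (?B a)) \<le> (\<Sum>a\<in>ZL L. exp (- S / 100))"
    using prob_Pi_bernoulli_cos_square_sum_le[OF L S(1,3)] by (intro sum_mono) (simp add: I_def p_def)
  moreover have "(\<Sum>a\<in>ZL L. exp (- S / 100)) \<le> (2 * real L + 1) * exp (- \<sigma> / 100)"
    using card_ZL_le[of L] S(2) by (simp add: mult_mono)
  ultimately show ?thesis
    unfolding S_def by linarith
qed

lemma eventually_polylog_window:
  assumes "\<forall>\<^sub>F L in sequentially. ln (real L) ^ 9 \<le> s L \<and> s L \<le> real L / ln (real L) ^ 5"
  shows "\<forall>\<^sub>F L in sequentially. 100 \<le> L \<and> 0 < ln (real L) ^ 9 \<and> ln (real L) ^ 9 \<le> s L \<and> s L \<le> real L"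
proof -
  have "\<forall>\<^sub>F L in sequentially. 1 \<le> ln (real L)"
    by real_asymp
  with assms eventually_ge_at_top[of "100 :: nat"] show ?thesis
  proof eventually_elim
    case (elim L)
    then have "real L / ln (real L) ^ 5 \<le> real L"
      using one_le_power[of "ln (real L)" 5] by (simp add: divide_le_eq)
    with elim show ?case
      by auto
  qed
qed

theorem lemma5p8:
  fixes s :: "nat \<Rightarrow> real"
  assumes "\<forall>\<^sub>F L in sequentially. (ln (real L)) ^ 9 \<le> s L \<and> s L \<le> real L / (ln (real L)) ^ 5"
  shows "typically_sparse (sym_bernoulli_support s) s (1/2) 2
         \<and> cosine_generic (sym_bernoulli_support s) (\<lambda>L. s L / 32)"
proof -
  note ev = eventually_polylog_window[OF assms]
  have sparse: "\<forall>\<^sub>F L in sequentially. 1 - exp (1 - ln (real L) ^ 9 / 20) - exp (- (ln (real L) ^ 9) / 10)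
      \<le> measure_pmf.prob (sym_bernoulli_support s L)
            {Xi. 1/2 * s L \<le> real (card Xi) \<and> real (card Xi) \<le> 2 * s L}"
    using ev by eventually_elim (rule sym_bernoulli_support_sparse_prob_ge; simp)
  have cosine: "\<forall>\<^sub>F L in sequentially. 1 - (2 * real L + 1) * exp (- (ln (real L) ^ 9) / 100)
      \<le> measure_pmf.prob (sym_bernoulli_support s L) {Xi. \<forall>a\<in>ZL L. s L / 32 \<le> cosV L Xi a}"
    using ev by eventually_elim (rule sym_bernoulli_support_cosine_prob_ge; simp)
  have "typically_sparse (sym_bernoulli_support s) s (1/2) 2"
    unfolding typically_sparse_def
    by (rule tendsto_sandwich[OF sparse _ _ tendsto_const]) (simp, real_asymp)
  moreover have "((\<lambda>L. measure_pmf.prob (sym_bernoulli_support s L)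
      {Xi. \<forall>a\<in>ZL L. s L / 32 \<le> cosV L Xi a}) \<longlongrightarrow> 1) sequentially"
    by (rule tendsto_sandwich[OF cosine _ _ tendsto_const]) (simp, real_asymp)
  then have "cosine_generic (sym_bernoulli_support s) (\<lambda>L. s L / 32)"
    unfolding cosine_generic_def by (intro exI[of _ "\<lambda>_. 0"]) simp
  ultimately show ?thesis ..
qed

end
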